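(* For every integer $n \geq 2$, $$P_{11}(n) := \prod_{j=5}^{n} p_j > \left(n \log(n)\right)^n e^{-2n-2},$$ where $p_j$ denotes the $j$-th prime ($p_1 = 2, p_2 = 3, \dots$, so $p_5 = 11$), and the empty product (for $n < 5$) equals $1$. *)

theory Defs
  imports "HOL-Analysis.Analysis" "HOL-Computational_Algebra.Primes"
begin

text \<open>The j-th prime, 1-indexed: nth_prime 1 = 2, nth_prime 2 = 3, ...
  (enumerate is 0-indexed, so we shift by one).\<close>
definition nth_prime :: "nat \<Rightarrow> nat" where
  "nth_prime j = enumerate {p::nat. prime p} (j - 1)"

end

theory Submission
  imports Defs
begin

text \<open>
  Write theta_n = ln (p_1 * ... * p_n), Chebyshev's function theta at the n-th prime.
  Erdos' bound 4^x for the product of the primes up to x gives theta_n <= p_n ln 4, hence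
  ln p_n >= ln theta_n - ln ln 4 and theta_n - ln theta_n >= theta_(n-1) - ln ln 4.
  Since t - ln t is increasing for t >= 1, this recursion carries the lower bound
  g(x) = x ln x + x ln ln x - 2x + 10 from n - 1 to n whenever g(n) - ln g(n) + ln ln 4 <= g(n - 1),
  which holds for n >= 21. At n = 20 the crude bound p_j >= 2j - 1 suffices to start the induction.
  Dividing by p_1 p_2 p_3 p_4 = 210 < e^12 gives the claim for n >= 20; for n < 20 the crude
  bound suffices directly.
\<close>

section \<open>Numerical bounds for exp and ln\<close>

lemma exp_ge_Taylor_sum:
  fixes x :: real
  assumes "0 \<le> x"
  shows "(\<Sum>k<n. x ^ k / fact k) \<le> exp x"
proof -
  have sums: "(\<lambda>k. x ^ k / fact k) sums exp x"
    using exp_converges[of x] by (simp add: divide_inverse mult.commute)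
  then have "(\<Sum>k<n. x ^ k / fact k) \<le> (\<Sum>k. x ^ k / fact k)"
    by (intro sum_le_suminf) (use assms sums_summable in auto)
  then show ?thesis
    using sums_unique[OF sums] by simp
qed

lemma ln_le_of_le_Taylor_sum:
  fixes a x :: real
  assumes "0 < a" "0 \<le> x" "a \<le> (\<Sum>k<n. x ^ k / fact k)"
  shows "ln a \<le> x"
  using assms exp_ge_Taylor_sum[of x n] by (metis ln_exp ln_le_cancel_iff exp_gt_zero order.trans)

lemma exp_of_nat_le_pow: "exp (real k) \<le> (272/100) ^ k"
proof -
  have "exp 1 < exp (ln (272/100 :: real))"
    using ln_272_gt_1 by (simp only: exp_less_cancel_iff)
  then have "exp 1 \<le> (272/100 :: real)"
    by simp
  then have "exp 1 ^ k \<le> (272/100 :: real) ^ k"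
    by (intro power_mono) auto
  then show ?thesis
    by (simp flip: exp_of_nat_mult)
qed

lemma exp_of_nat_ge_pow: "(2718/1000) ^ k \<le> exp (real k)"
proof -
  have "(2718/1000 :: real) \<le> (\<Sum>k<7. 1 ^ k / fact k)"
    by (simp add: numeral_eq_Suc fact_numeral)
  also have "\<dots> \<le> exp 1"
    by (rule exp_ge_Taylor_sum) simp
  finally have "(2718/1000 :: real) ^ k \<le> exp 1 ^ k"
    by (intro power_mono) auto
  then show ?thesis
    by (simp flip: exp_of_nat_mult)
qed

text \<open>This is ln z >= 1 - 1/z for z = a / e^k.\<close>

lemma ln_ge_of_nat_sub_pow_div:
  fixes a :: real
  assumes "0 < a"
  shows "real k + 1 - (272/100) ^ k / a \<le> ln a"
proof -
  have "ln (exp (real k) / a) \<le> exp (real k) / a - 1"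
    using assms by (intro ln_le_minus_one) simp
  then have "real k + 1 - exp (real k) / a \<le> ln a"
    using assms by (simp add: ln_div)
  moreover have "exp (real k) / a \<le> (272/100) ^ k / a"
    using assms exp_of_nat_le_pow by (intro divide_right_mono) auto
  ultimately show ?thesis
    by linarith
qed

lemma ln_20_bounds: "299/100 \<le> ln (20 :: real)" "ln (20 :: real) \<le> 3"
proof -
  have "real 3 + 1 - (272/100) ^ 3 / 20 \<le> ln (20 :: real)"
    by (rule ln_ge_of_nat_sub_pow_div) simp
  then show "299/100 \<le> ln (20 :: real)"
    by (simp add: power_divide)
  show "ln (20 :: real) \<le> 3"
    by (rule ln_le_of_le_Taylor_sum[where n = 10]) (simp_all add: numeral_eq_Suc fact_numeral)
qed

section \<open>The product of the primes up to n is at most 4^n\<close>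

lemma binomial_odd_central_le_four_pow: "(2 * m + 1 choose m) \<le> 4 ^ m"
proof -
  have "(2 * m + 1 choose m) + (2 * m + 1 choose (m + 1)) = (\<Sum>k\<in>{m, m + 1}. 2 * m + 1 choose k)"
    by simp
  also have "\<dots> \<le> (\<Sum>k\<le>2 * m + 1. 2 * m + 1 choose k)"
    by (rule sum_mono2) auto
  also have "\<dots> = 2 ^ (2 * m + 1)"
    by (rule choose_row_sum)
  also have "\<dots> = 2 * 4 ^ m"
    by (simp add: power_add power_mult)
  finally show ?thesis
    using binomial_symmetric[of "m + 1" "2 * m + 1"] by simp
qed

lemma prod_primes_dvd_binomial:
  "\<Prod>{p::nat. prime p \<and> m + 1 < p \<and> p \<le> 2 * m + 1} dvd (2 * m + 1 choose m)"
proof -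
  let ?P = "\<Prod>{p::nat. prime p \<and> m + 1 < p \<and> p \<le> 2 * m + 1}"
  have "?P dvd \<Prod>{m + 1 + 1..2 * m + 1}"
    by (intro prod_dvd_prod_subset) auto
  also have "\<Prod>{m + 1 + 1..2 * m + 1} = fact (2 * m + 1) div fact (m + 1)"
    by (rule fact_div_fact[symmetric]) simp
  also have "fact (2 * m + 1) = fact m * fact (m + 1) * (2 * m + 1 choose m)"
    using binomial_fact_lemma[of m "2 * m + 1"] by (simp add: Suc_diff_le)
  also have "\<dots> div fact (m + 1) = (2 * m + 1 choose m) * fact m"
    by simp
  finally have "?P dvd (2 * m + 1 choose m) * fact m" .
  moreover have "coprime ?P (fact m)"
    by (rule prod_coprime_left) (auto simp: prime_imp_coprime prime_dvd_fact_iff)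
  ultimately show ?thesis
    by (simp add: coprime_dvd_mult_left_iff)
qed

lemma prod_primes_le_four_pow: "\<Prod>{p::nat. prime p \<and> p \<le> n} \<le> 4 ^ n"
proof (induction n rule: less_induct)
  case (less n)
  consider "n \<le> 1" | "n = 2" | "2 < n" "even n" | m where "n = 2 * m + 1" "1 \<le> m"
    by (cases "n \<le> 1"; cases "n = 2"; cases "even n") (auto elim!: oddE)
  then show ?case
  proof cases
    case 1
    then have "{p::nat. prime p \<and> p \<le> n} = {}"
      by (auto dest: prime_gt_1_nat)
    then show ?thesis
      by (simp only: prod.empty) simp
  next
    case 2
    then have "{p::nat. prime p \<and> p \<le> n} = {2}"
      by (auto dest: prime_gt_1_nat simp: le_Suc_eq)
    then show ?thesis
      using 2 by simp
  next
    case 3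
    then have "\<not> prime n"
      using prime_odd_nat by blast
    then have "{p::nat. prime p \<and> p \<le> n} = {p. prime p \<and> p \<le> n - 1}"
      by (auto simp: le_eq_less_or_eq)
    then have "\<Prod>{p::nat. prime p \<and> p \<le> n} \<le> 4 ^ (n - 1)"
      using less.IH 3 by simp
    also have "\<dots> \<le> 4 ^ n"
      by (intro power_increasing) auto
    finally show ?thesis .
  next
    case (4 m)
    let ?A = "{p::nat. prime p \<and> p \<le> m + 1}"
    let ?B = "{p::nat. prime p \<and> m + 1 < p \<and> p \<le> 2 * m + 1}"
    have "{p::nat. prime p \<and> p \<le> n} = ?A \<union> ?B"
      using 4 by auto
    then have "\<Prod>{p::nat. prime p \<and> p \<le> n} = \<Prod>?A * \<Prod>?B"
      by (simp add: prod.union_disjoint disjoint_iff)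
    also have "\<dots> \<le> 4 ^ (m + 1) * 4 ^ m"
    proof (rule mult_le_mono)
      show "\<Prod>?A \<le> 4 ^ (m + 1)"
        using less.IH[of "m + 1"] 4 by simp
      have "\<Prod>?B \<le> (2 * m + 1 choose m)"
        by (rule dvd_imp_le[OF prod_primes_dvd_binomial]) simp
      then show "\<Prod>?B \<le> 4 ^ m"
        using binomial_odd_central_le_four_pow[of m] by linarith
    qed
    also have "\<dots> = 4 ^ n"
      using 4 by (simp flip: power_add)
    finally show ?thesis .
  qed
qed

section \<open>The n-th prime\<close>

lemma prime_nth_prime: "prime (nth_prime j)"
  unfolding nth_prime_def using enumerate_in_set[OF primes_infinite] by simp

lemma mono_nth_prime: "mono nth_prime"
  unfolding nth_prime_def by (rule monoI) (simp add: primes_infinite diff_le_mono)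

lemma nth_prime_less_Suc: "0 < j \<Longrightarrow> nth_prime j < nth_prime (Suc j)"
  unfolding nth_prime_def using enumerate_step[OF primes_infinite] by (cases j) auto

lemma inj_on_nth_prime: "inj_on nth_prime {1..}"
proof (rule inj_onI)
  fix i j :: nat
  assume "i \<in> {1..}" "j \<in> {1..}" "nth_prime i = nth_prime j"
  then have "i - 1 \<le> j - 1" "j - 1 \<le> i - 1"
    unfolding nth_prime_def using primes_infinite by (metis enumerate_mono_le_iff order_refl)+
  with \<open>i \<in> {1..}\<close> \<open>j \<in> {1..}\<close> show "i = j"
    by simp
qed

lemma nth_prime_Suc_Suc: "nth_prime (Suc (Suc j)) = (LEAST p. prime p \<and> nth_prime (Suc j) < p)"
  unfolding nth_prime_def using enumerate_Suc''[OF primes_infinite] by simp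

lemma nth_prime_1: "nth_prime 1 = 2"
proof -
  have "(LEAST p::nat. prime p) = 2"
    by (rule Least_equality) (auto simp: prime_ge_2_nat)
  then show ?thesis
    by (simp add: nth_prime_def enumerate_0)
qed

lemma nth_prime_SucI:
  assumes "nth_prime j = a" "0 < j" "prime q" "a < q" "\<And>p. a < p \<Longrightarrow> p < q \<Longrightarrow> \<not> prime p"
  shows "nth_prime (j + 1) = q"
proof -
  obtain i where i: "j = Suc i"
    using assms(2) gr0_implies_Suc by blast
  have "nth_prime (j + 1) = (LEAST p. prime p \<and> a < p)"
    using nth_prime_Suc_Suc[of i] assms(1) i by simp
  also have "\<dots> = q"
    by (rule Least_equality) (use assms(3-5) not_less in blast)+
  finally show ?thesis .
qed

lemma nth_prime_2_3_4: "nth_prime 2 = 3" "nth_prime 3 = 5" "nth_prime 4 = 7"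
proof -
  show 2: "nth_prime 2 = 3"
    using nth_prime_SucI[OF nth_prime_1, of 3] unfolding one_add_one by simp
  have "\<not> prime p" if "3 < p" "p < (5::nat)" for p
    using that by (cases "p = 4") simp_all
  then show 3: "nth_prime 3 = 5"
    using nth_prime_SucI[OF 2, of 5] by simp
  have "\<not> prime p" if "5 < p" "p < (7::nat)" for p
    using that by (cases "p = 6") simp_all
  then show "nth_prime 4 = 7"
    using nth_prime_SucI[OF 3, of 7] by simp
qed

lemma two_mul_minus_one_le_nth_prime: "2 * j - 1 \<le> nth_prime j"
proof (induction j)
  case 0
  then show ?case
    by simp
next
  case (Suc j)
  show ?case
  proof (cases j)
    case 0
    then show ?thesis
      using nth_prime_1 by simp
  next
    case (Suc i)
    let ?q = "nth_prime (Suc (Suc i))"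
    have "2 * i + 1 \<le> nth_prime (Suc i)"
      using Suc.IH Suc by simp
    moreover have "nth_prime (Suc i) < ?q"
      by (rule nth_prime_less_Suc) simp
    moreover have "2 \<le> nth_prime (Suc i)"
      by (rule prime_ge_2_nat[OF prime_nth_prime])
    ultimately have "2 * i + 1 < ?q" "odd ?q"
      using prime_odd_nat[OF prime_nth_prime] by auto
    then have "2 * i + 3 \<le> ?q"
      by presburger
    then show ?thesis
      using Suc by simp
  qed
qed

lemma prod_nth_prime_le_four_pow: "(\<Prod>j=1..n. nth_prime j) \<le> 4 ^ nth_prime n"
proof -
  have "(\<Prod>j=1..n. nth_prime j) = \<Prod>(nth_prime ` {1..n})"
    using prod.reindex[OF inj_on_subset[OF inj_on_nth_prime], of "{1..n}" id] by auto
  also have "\<dots> \<le> \<Prod>{p. prime p \<and> p \<le> nth_prime n}"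
    by (intro dvd_imp_le prod_dvd_prod_subset)
       (auto simp: prime_nth_prime monoD[OF mono_nth_prime] prime_gt_0_nat intro!: prod_pos)
  also have "\<dots> \<le> 4 ^ nth_prime n"
    by (rule prod_primes_le_four_pow)
  finally show ?thesis .
qed

section \<open>A lower bound for Chebyshev's function at the n-th prime\<close>

definition theta_nth :: "nat \<Rightarrow> real" where
  "theta_nth n = (\<Sum>j=1..n. ln (real (nth_prime j)))"

lemma exp_theta_nth: "exp (theta_nth n) = (\<Prod>j=1..n. real (nth_prime j))"
  unfolding theta_nth_def exp_sum[OF finite_atLeastAtMost]
  by (intro prod.cong) (auto simp: prime_gt_0_nat prime_nth_prime)

lemma theta_nth_Suc: "theta_nth (Suc n) = theta_nth n + ln (real (nth_prime (Suc n)))"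
  unfolding theta_nth_def by simp

lemma theta_nth_le: "theta_nth n \<le> ln 4 * real (nth_prime n)"
proof -
  have "exp (theta_nth n) \<le> 4 ^ nth_prime n"
    unfolding exp_theta_nth using prod_nth_prime_le_four_pow[of n]
    by (metis of_nat_le_iff of_nat_numeral of_nat_power of_nat_prod)
  then have "theta_nth n \<le> ln (4 ^ nth_prime n)"
    by (subst ln_ge_iff) auto
  then show ?thesis
    by (simp add: ln_realpow mult.commute)
qed

lemma theta_nth_20_ge: "52 \<le> theta_nth 20"
proof -
  have "exp 52 \<le> (272/100 :: real) ^ 52"
    using exp_of_nat_le_pow[of 52] by simp
  also have "\<dots> \<le> (\<Prod>j=1..20. real (2 * j - 1))"
    by (simp add: prod_atLeastAtMost_code fold_atLeastAtMost_nat.simps power_divide)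
  also have "\<dots> \<le> exp (theta_nth 20)"
    unfolding exp_theta_nth
    by (intro prod_mono) (auto simp only: of_nat_le_iff of_nat_0_le_iff two_mul_minus_one_le_nth_prime)
  finally show ?thesis
    by simp
qed

definition theta_minorant :: "real \<Rightarrow> real" where
  "theta_minorant x = x * ln x + x * ln (ln x) - 2 * x + 10"

lemma theta_minorant_ge_10:
  assumes "20 \<le> x"
  shows "10 \<le> theta_minorant x"
proof -
  have "ln 20 \<le> ln x"
    using assms by simp
  then have "2 \<le> ln x"
    using ln_20_bounds(1) by linarith
  moreover have "0 \<le> ln (ln x)"
    using \<open>2 \<le> ln x\<close> by simp
  ultimately have "0 \<le> x * (ln x + ln (ln x) - 2)"
    using assms by (intro mult_nonneg_nonneg) linarith+
  then show ?thesis
    unfolding theta_minorant_def by (simp add: algebra_simps)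
qed

lemma theta_minorant_diff_le:
  assumes "3 \<le> x"
  shows "theta_minorant x - theta_minorant (x - 1) \<le> ln x + ln (ln x) - 1 + 1 / ln (x - 1)"
proof -
  define y where "y = x - 1"
  have y: "2 \<le> y" "x = y + 1"
    using assms by (simp_all add: y_def)
  have "0 < ln y" "ln y < ln x"
    using y by simp_all
  have ln_diff: "y * (ln x - ln y) \<le> 1"
  proof -
    have "ln (x / y) \<le> x / y - 1"
      using y by (intro ln_le_minus_one) simp
    then show ?thesis
      using y by (simp add: ln_div field_simps)
  qed
  have "ln (ln x / ln y) \<le> ln x / ln y - 1"
    using \<open>0 < ln y\<close> \<open>ln y < ln x\<close> by (intro ln_le_minus_one) simp
  then have "ln (ln x) - ln (ln y) \<le> (ln x - ln y) / ln y"
    using \<open>0 < ln y\<close> \<open>ln y < ln x\<close> by (simp add: ln_div diff_divide_distrib)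
  then have "y * (ln (ln x) - ln (ln y)) \<le> y * ((ln x - ln y) / ln y)"
    using y by (intro mult_left_mono) simp_all
  also have "\<dots> = y * (ln x - ln y) / ln y"
    by simp
  also have "\<dots> \<le> 1 / ln y"
    using ln_diff \<open>0 < ln y\<close> by (intro divide_right_mono) simp_all
  finally have ln_ln_diff: "y * (ln (ln x) - ln (ln y)) \<le> 1 / ln y" .
  have "theta_minorant x - theta_minorant (x - 1)
      = ln x + y * (ln x - ln y) + ln (ln x) + y * (ln (ln x) - ln (ln y)) - 2"
    unfolding theta_minorant_def y_def[symmetric] using y by (simp add: algebra_simps)
  then show ?thesis
    using ln_diff ln_ln_diff by (simp add: y_def)
qed

lemma exp_inverse_ln_minus_one_le:
  fixes x :: real
  assumes "21 \<le> x"
  shows "exp (1 / ln (x - 1) - 1) \<le> 52/100"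
proof -
  have "ln 20 \<le> ln (x - 1)"
    using assms by simp
  then have "299/100 \<le> ln (x - 1)"
    using ln_20_bounds(1) by linarith
  then have "1 / ln (x - 1) - 1 \<le> - (199/299)"
    by (simp add: divide_simps)
  moreover have "exp (- (199/299)) \<le> (52/100 :: real)"
  proof -
    have "(100/52 :: real) \<le> (\<Sum>k<5. (199/299) ^ k / fact k)"
      by (simp add: numeral_eq_Suc fact_numeral)
    also have "\<dots> \<le> exp (199/299)"
      by (rule exp_ge_Taylor_sum) simp
    finally show ?thesis
      by (simp add: exp_minus field_simps)
  qed
  ultimately show ?thesis
    by (meson exp_le_cancel_iff order.trans)
qed

lemma ln_ge_3:
  fixes x :: real
  assumes "21 \<le> x"
  shows "3 \<le> ln x"
proof -
  have "real 3 + 1 - (272/100) ^ 3 / 21 \<le> ln (21 :: real)"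
    by (rule ln_ge_of_nat_sub_pow_div) simp
  moreover have "ln 21 \<le> ln x"
    using assms by simp
  ultimately show ?thesis
    by (simp add: power_divide)
qed

lemma theta_minorant_div_ge:
  assumes "21 \<le> x"
  shows "ln 4 * ln x * exp (1 / ln (x - 1) - 1) \<le> theta_minorant x / x"
proof -
  have ln_4: "ln 4 \<le> (139/100 :: real)"
    by (rule ln_le_of_le_Taylor_sum[where n = 8]) (simp_all add: numeral_eq_Suc fact_numeral)
  have "3 \<le> ln x"
    using ln_ge_3[OF assms] .
  then have "exp 1 \<le> ln x"
    using exp_le by linarith
  then have "1 \<le> ln (ln x)"
    using \<open>3 \<le> ln x\<close> by (subst ln_ge_iff) auto
  have "ln 4 * ln x * exp (1 / ln (x - 1) - 1) \<le> 139/100 * ln x * (52/100)"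
    using ln_4 exp_inverse_ln_minus_one_le[OF assms] \<open>3 \<le> ln x\<close> by (intro mult_mono) simp_all
  moreover have "theta_minorant x / x = ln x + ln (ln x) - 2 + 10 / x"
    unfolding theta_minorant_def using assms by (simp add: field_simps)
  txt \<open>Up to x = 55 the constant 10 in the minorant is needed; beyond, ln x >= 4 suffices.\<close>
  moreover have "10 / 55 \<le> 10 / x \<or> 4 \<le> ln x"
  proof (cases "x \<le> 55")
    case True
    then show ?thesis
      using assms by (intro disjI1 divide_left_mono) auto
  next
    case False
    have "real 4 + 1 - (272/100) ^ 4 / 55 \<le> ln (55 :: real)"
      by (rule ln_ge_of_nat_sub_pow_div) simp
    moreover have "ln 55 \<le> ln x"
      using False by simp
    ultimately show ?thesis
      by (simp add: power_divide)
  qed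
  moreover have "0 \<le> 10 / x"
    using assms by simp
  ultimately show ?thesis
    using \<open>3 \<le> ln x\<close> \<open>1 \<le> ln (ln x)\<close> by linarith
qed

lemma theta_minorant_step:
  assumes "21 \<le> x"
  shows "theta_minorant x - ln (theta_minorant x) + ln (ln 4) \<le> theta_minorant (x - 1)"
proof -
  have "0 < theta_minorant x"
    using theta_minorant_ge_10[of x] assms by simp
  have "0 < ln x"
    using assms by simp
  have "ln (ln 4) + ln (ln x) + (1 / ln (x - 1) - 1) = ln (ln 4 * ln x * exp (1 / ln (x - 1) - 1))"
    using \<open>0 < ln x\<close> by (simp add: ln_mult)
  also have "\<dots> \<le> ln (theta_minorant x / x)"
    using theta_minorant_div_ge[OF assms] \<open>0 < ln x\<close> \<open>0 < theta_minorant x\<close> assms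
    by (subst ln_le_cancel_iff) auto
  also have "\<dots> = ln (theta_minorant x) - ln x"
    using assms \<open>0 < theta_minorant x\<close> by (simp add: ln_div)
  finally show ?thesis
    using theta_minorant_diff_le[of x] assms by linarith
qed

lemma diff_ln_le_imp_le:
  fixes a b :: real
  assumes "1 < a" "1 \<le> b" "b - ln b \<le> a - ln a"
  shows "b \<le> a"
proof (rule ccontr)
  assume "\<not> b \<le> a"
  then have "ln b - ln a \<le> b / a - 1"
    using assms ln_le_minus_one[of "b / a"] by (simp add: ln_div)
  also have "\<dots> = (b - a) / a"
    using assms by (simp add: field_simps)
  also have "\<dots> < b - a"
    using assms \<open>\<not> b \<le> a\<close> by (simp add: divide_less_eq)
  finally show False
    using assms(3) by linarith
qed

lemma theta_minorant_le_theta_nth_Suc: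
  assumes "20 \<le> n" and IH: "theta_minorant (real n) \<le> theta_nth n"
  shows "theta_minorant (real (Suc n)) \<le> theta_nth (Suc n)"
proof -
  define p where "p = real (nth_prime (Suc n))"
  have "2 \<le> p"
    unfolding p_def using prime_ge_2_nat[OF prime_nth_prime] by simp
  have theta_Suc: "theta_nth (Suc n) = theta_nth n + ln p"
    unfolding p_def by (rule theta_nth_Suc)
  have "10 \<le> theta_nth n"
    using IH theta_minorant_ge_10[of "real n"] assms by simp
  then have "1 < theta_nth (Suc n)"
    using theta_Suc ln_ge_zero[of p] \<open>2 \<le> p\<close> by linarith
  moreover have "theta_nth (Suc n) \<le> ln 4 * p"
    unfolding p_def by (rule theta_nth_le)
  ultimately have "ln (theta_nth (Suc n)) \<le> ln (ln 4) + ln p"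
    using \<open>2 \<le> p\<close> by (simp add: ln_mult flip: ln_le_cancel_iff)
  moreover have "theta_minorant (real (Suc n)) - ln (theta_minorant (real (Suc n))) + ln (ln 4)
      \<le> theta_minorant (real n)"
    using theta_minorant_step[of "real (Suc n)"] assms by simp
  ultimately have "theta_minorant (real (Suc n)) - ln (theta_minorant (real (Suc n)))
      \<le> theta_nth (Suc n) - ln (theta_nth (Suc n))"
    using IH theta_Suc by linarith
  moreover have "1 \<le> theta_minorant (real (Suc n))"
    using theta_minorant_ge_10[of "real (Suc n)"] assms by simp
  ultimately show ?thesis
    using diff_ln_le_imp_le \<open>1 < theta_nth (Suc n)\<close> by blast
qed

lemma theta_minorant_le_theta_nth:
  assumes "20 \<le> n"
  shows "theta_minorant (real n) \<le> theta_nth n"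
  using assms
proof (induction n rule: nat_induct_at_least)
  case base
  have "ln (ln (20 :: real)) \<le> ln 3"
    using ln_20_bounds by simp
  also have "ln 3 \<le> (11/10 :: real)"
    by (rule ln_le_of_le_Taylor_sum[where n = 7]) (simp_all add: numeral_eq_Suc fact_numeral)
  finally have "theta_minorant 20 \<le> 52"
    unfolding theta_minorant_def using ln_20_bounds(2) by simp
  then show ?case
    using theta_nth_20_ge by simp
next
  case (Suc n)
  then show ?case
    by (rule theta_minorant_le_theta_nth_Suc)
qed

lemma prod_nth_prime_from_5:
  assumes "4 \<le> n"
  shows "(\<Prod>j = 5..n. real (nth_prime j)) = exp (theta_nth n) / 210"
proof -
  have "{1..4::nat} = {1, 2, 3, 4}"
    by auto
  then have "(\<Prod>j = 1..4. real (nth_prime j)) = 210"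
    using nth_prime_1 nth_prime_2_3_4 by simp
  moreover have "exp (theta_nth n) = (\<Prod>j = 1..4 + (n - 4). real (nth_prime j))"
    using assms by (simp add: exp_theta_nth)
  then have "exp (theta_nth n) = (\<Prod>j = 1..4. real (nth_prime j)) * (\<Prod>j = 5..n. real (nth_prime j))"
    using assms by (subst (asm) prod.ub_add_nat) simp_all
  ultimately show ?thesis
    by simp
qed

lemma pow_mul_exp_eq_exp_theta_minorant:
  assumes "2 \<le> n"
  shows "(real n * ln (real n)) ^ n * exp (- 2 * real n - 2) = exp (theta_minorant (real n) - 12)"
proof -
  have "0 < ln (real n)"
    using assms by simp
  then have "(real n * ln (real n)) ^ n = exp (real n * ln (real n * ln (real n)))"
    using assms by (simp add: exp_of_nat_mult)
  also have "real n * ln (real n * ln (real n)) = real n * ln (real n) + real n * ln (ln (real n))"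
    using \<open>0 < ln (real n)\<close> assms by (simp add: ln_mult algebra_simps)
  finally show ?thesis
    unfolding theta_minorant_def by (simp flip: exp_add)
qed

lemma three_mul_pow_lt_prod_odd:
  assumes "2 \<le> n" "n \<le> 19"
  shows "(3 * real n) ^ n < (\<Prod>j = 5..n. real (2 * j - 1)) * (2718/1000) ^ (2 * n + 2)"
proof -
  have "n \<in> {2, 3, 4, 5, 6, 7, 8, 9, 10, 11, 12, 13, 14, 15, 16, 17, 18, 19}"
    using assms by simp presburger
  then show ?thesis
    by (elim insertE) (simp_all add: prod_atLeastAtMost_code fold_atLeastAtMost_nat.simps power_divide)
qed

lemma pow_mul_exp_lt_prod_odd:
  assumes "2 \<le> n" "n \<le> 19"
  shows "(real n * ln (real n)) ^ n * exp (- 2 * real n - 2) < (\<Prod>j = 5..n. real (2 * j - 1))"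
proof -
  have "ln (real n) \<le> ln 20"
    using assms by simp
  then have "ln (real n) \<le> 3"
    using ln_20_bounds(2) by linarith
  then have pow_le: "(real n * ln (real n)) ^ n \<le> (3 * real n) ^ n"
    using assms by (intro power_mono) simp_all
  have exp_ge: "(2718/1000) ^ (2 * n + 2) \<le> exp (2 * real n + 2)"
    using exp_of_nat_ge_pow[of "2 * n + 2"] by (simp only: of_nat_add of_nat_mult of_nat_numeral)
  have "exp (- 2 * real n - 2) = inverse (exp (2 * real n + 2))"
    by (subst exp_minus[symmetric]) simp
  then have "(real n * ln (real n)) ^ n * exp (- 2 * real n - 2)
      = (real n * ln (real n)) ^ n / exp (2 * real n + 2)"
    by (simp add: divide_inverse)
  also have "\<dots> \<le> (3 * real n) ^ n / exp (2 * real n + 2)"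
    using pow_le by (rule divide_right_mono) simp
  also have "\<dots> \<le> (3 * real n) ^ n / (2718/1000) ^ (2 * n + 2)"
    using exp_ge by (intro divide_left_mono) simp_all
  also have "\<dots> < (\<Prod>j = 5..n. real (2 * j - 1))"
    using three_mul_pow_lt_prod_odd[OF assms] by (simp add: divide_less_eq)
  finally show ?thesis .
qed

theorem lemma2p11:
  fixes n :: nat
  assumes "n \<ge> 2"
  shows "(\<Prod>j = 5..n. real (nth_prime j)) > (real n * ln (real n)) ^ n * exp (- 2 * real n - 2)"
proof (cases "20 \<le> n")
  case True
  have "ln 210 \<le> (11 :: real)"
    by (rule ln_le_of_le_Taylor_sum[where n = 4]) (simp_all add: numeral_eq_Suc fact_numeral)
  then have "theta_minorant (real n) - 12 < theta_nth n - ln 210"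
    using theta_minorant_le_theta_nth[OF True] by linarith
  then have "(real n * ln (real n)) ^ n * exp (- 2 * real n - 2) < exp (theta_nth n - ln 210)"
    unfolding pow_mul_exp_eq_exp_theta_minorant[OF assms] by simp
  also have "\<dots> = (\<Prod>j = 5..n. real (nth_prime j))"
    using prod_nth_prime_from_5 True by (simp add: exp_diff)
  finally show ?thesis .
next
  case False
  have "(\<Prod>j = 5..n. real (2 * j - 1)) \<le> (\<Prod>j = 5..n. real (nth_prime j))"
    by (intro prod_mono) (auto simp only: of_nat_le_iff of_nat_0_le_iff two_mul_minus_one_le_nth_prime)
  then show ?thesis
    using pow_mul_exp_lt_prod_odd[OF assms] False by simp
qed

end
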